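(* Let $t\ge 2$ be an integer, let $\mathcal A$ be an alphabet, and let $\mathfrak C_t$ be the simple 2-level network $([t,t+1],[t,t])$, with an adversary able to corrupt up to $t$ of the edges outgoing from the source. Then, for every positive integer $i$, the $i$-shot capacity of $\mathfrak C_t$ (in Scenario A.1 as well as in Scenario A.2) is \[C_i(\mathfrak C_t,\mathcal A,\mathbf A_{\mathfrak C_t})=1.\]
   Context: An alphabet is a finite set $\mathcal A$ with $|\mathcal A|\ge 2$. For positive integers $a_j,b_j$, the simple 2-level network $([a_1,\dots,a_n],[b_1,\dots,b_n])$ is the directed acyclic multigraph with a source $S$, intermediate nodes $V_1,\dots,V_n$, a single terminal $T$, exactly $a_j$ parallel edges from $S$ to $V_j$ and exactly $b_j$ parallel edges from $V_j$ to $T$, and no other edges. Each edge carries one symbol of $\mathcal A$. A network code is a family $\mathcal F=\{\mathcal F_{V_j}:\mathcal A^{a_j}\to\mathcal A^{b_j}\}_j$. In one use, the source sends $x\in\mathcal A^{a_1+\dots+a_n}$ on its outgoing edges (the set $\mathcal U_S$), the adversary may replace the symbols on up to $t$ edges of $\mathcal U_S$ by arbitrary symbols, each $V_j$ applies $\mathcal F_{V_j}$ to the symbols it receives and sends the result to $T$. The fan-out set $\Omega_{\mathcal F}(x)$ is the set of all vectors $T$ can receive. For $i$ uses with the same network code, the input is $(x^1,\dots,x^i)$ and: in Scenario A.1 the adversary fixes one set $W\subseteq\mathcal U_S$ with $|W|\le t$ and in each of the $i$ rounds may alter (arbitrarily, independently per round) only symbols on edges of $W$; in Scenario A.2 the adversary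 may choose a different set of at most $t$ edges in each round, so the fan-out set is $\Omega_{\mathcal F}(x^1)\times\dots\times\Omega_{\mathcal F}(x^i)$. A nonempty code $C\subseteq(\mathcal A^{a_1+\dots+a_n})^i$ is unambiguous if distinct codewords have disjoint fan-out sets. The $i$-shot capacity $C_i$ is the maximum of $\log_{|\mathcal A|}(|C|)/i$ over all network codes and unambiguous codes $C$. *)

theory Defs
  imports Main Complex_Main
begin

(* Simple 2-level network ([a_1..a_n],[b_1..b_n]) given by lists as, bs of equal length n.
   Source outgoing edges U_S are indexed 0..<sum_list as; the edges into V_j are the
   positions sum_list (take j as) ..< sum_list (take j as) + as!j. *)

definition vecs :: "'a set \<Rightarrow> nat \<Rightarrow> 'a list set" where
  "vecs A m = {u. length u = m \<and> set u \<subseteq> A}"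

definition alphabet :: "'a set \<Rightarrow> bool" where
  "alphabet A \<longleftrightarrow> finite A \<and> card A \<ge> 2"

definition n_src :: "nat list \<Rightarrow> nat" where
  "n_src as = sum_list as"

definition slice :: "nat list \<Rightarrow> nat \<Rightarrow> 'a list \<Rightarrow> 'a list" where
  "slice as j y = take (as ! j) (drop (sum_list (take j as)) y)"

definition network_code :: "'a set \<Rightarrow> nat list \<Rightarrow> nat list \<Rightarrow> ('a list \<Rightarrow> 'a list) list \<Rightarrow> bool" where
  "network_code A as bs F \<longleftrightarrow> length as = length bs \<and> length F = length as \<and>
     (\<forall>j < length as. \<forall>u \<in> vecs A (as ! j). (F ! j) u \<in> vecs A (bs ! j))"

definition net_out :: "nat list \<Rightarrow> ('a list \<Rightarrow> 'a list) list \<Rightarrow> 'a list \<Rightarrow> 'a list" where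
  "net_out as F y = concat (map (\<lambda>j. (F ! j) (slice as j y)) [0..<length as])"

definition fanout :: "'a set \<Rightarrow> nat list \<Rightarrow> ('a list \<Rightarrow> 'a list) list \<Rightarrow> nat \<Rightarrow> 'a list \<Rightarrow> 'a list set" where
  "fanout A as F t x = {net_out as F y | y. \<exists>W. W \<subseteq> {..<n_src as} \<and> card W \<le> t \<and>
       y \<in> vecs A (n_src as) \<and> (\<forall>e < n_src as. e \<notin> W \<longrightarrow> y ! e = x ! e)}"

datatype scenario = A1 | A2

fun fanout_multi :: "scenario \<Rightarrow> 'a set \<Rightarrow> nat list \<Rightarrow> ('a list \<Rightarrow> 'a list) list \<Rightarrow> nat \<Rightarrow> 'a list list \<Rightarrow> 'a list list set" where
  "fanout_multi A1 A as F t xs = {zs. length zs = length xs \<and>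
       (\<exists>W. W \<subseteq> {..<n_src as} \<and> card W \<le> t \<and>
          (\<forall>r < length xs. \<exists>y. y \<in> vecs A (n_src as) \<and>
              (\<forall>e < n_src as. e \<notin> W \<longrightarrow> y ! e = xs ! r ! e) \<and> zs ! r = net_out as F y))}"
| "fanout_multi A2 A as F t xs = {zs. length zs = length xs \<and>
       (\<forall>r < length xs. zs ! r \<in> fanout A as F t (xs ! r))}"

definition unambiguous :: "scenario \<Rightarrow> 'a set \<Rightarrow> nat list \<Rightarrow> ('a list \<Rightarrow> 'a list) list \<Rightarrow> nat \<Rightarrow> nat \<Rightarrow> 'a list list set \<Rightarrow> bool" where
  "unambiguous sc A as F t i C \<longleftrightarrow> C \<noteq> {} \<and>
     C \<subseteq> {xs. length xs = i \<and> (\<forall>r < i. xs ! r \<in> vecs A (n_src as))} \<and>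
     (\<forall>c \<in> C. \<forall>c' \<in> C. c \<noteq> c' \<longrightarrow> fanout_multi sc A as F t c \<inter> fanout_multi sc A as F t c' = {})"

definition capacity :: "scenario \<Rightarrow> 'a set \<Rightarrow> nat list \<Rightarrow> nat list \<Rightarrow> nat \<Rightarrow> nat \<Rightarrow> real" where
  "capacity sc A as bs t i = Max {log (real (card A)) (real (card C)) / real i | F C.
      network_code A as bs F \<and> unambiguous sc A as F t i C}"

end

theory Submission
  imports Defs
begin

text \<open>
Upper bound: if two codewords agree on the first source edge in every round, the adversary can
overwrite edges 1..t of one and edges t+1..2t of the other, the same edges in every round, so
that both are received identically already in Scenario A.1; hence an unambiguous code has at
most |A|^i codewords.
Lower bound: repeat each symbol on all 2t+1 source edges; V_1 forwards its t symbols and V_2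
sends a most frequent symbol among its t+1 inputs together with its multiplicity, which fits into
t symbols. If the repetitions of a and b, a \<noteq> b, led to the same output, the two corrupted
inputs would share their first t entries and their last t+1 entries would have the same mode
and top count. Then a occurs in the one plus b in the other at most 2t+1 times in total, while
each of them survives the corruption of t edges at least t+1 times.
\<close>

lemma n_src_two_nodes [simp]: "n_src [a, b] = a + b"
  by (simp add: n_src_def)

lemma net_out_two_nodes:
  "net_out [a, b] F y = (F ! 0) (take a y) @ (F ! 1) (take b (drop a y))"
  by (simp add: net_out_def slice_def upt_rec)

lemma nth_in_vecs: "v \<in> vecs A n \<Longrightarrow> e < n \<Longrightarrow> v ! e \<in> A"
  unfolding vecs_def by auto

lemma finite_vecs: "finite A \<Longrightarrow> finite (vecs A n)"
  unfolding vecs_def using finite_lists_length_eq[of A n] by (simp add: conj_commute)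

lemma card_vecs: "finite A \<Longrightarrow> card (vecs A n) = card A ^ n"
  unfolding vecs_def using card_lists_length_eq[of A n] by (simp add: conj_commute)

lemma fanout_multi_A1_subset: "fanout_multi A1 A as F t xs \<subseteq> fanout_multi sc A as F t xs"
proof (cases sc)
  case A1
  then show ?thesis by simp
next
  case A2
  show ?thesis
  proof
    fix zs assume "zs \<in> fanout_multi A1 A as F t xs"
    then obtain W where W: "W \<subseteq> {..<n_src as}" "card W \<le> t" and len: "length zs = length xs"
      and rounds: "\<forall>r < length xs. \<exists>y. y \<in> vecs A (n_src as) \<and>
         (\<forall>e < n_src as. e \<notin> W \<longrightarrow> y ! e = xs ! r ! e) \<and> zs ! r = net_out as F y"
      by auto
    have "zs ! r \<in> fanout A as F t (xs ! r)" if "r < length xs" for r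
      using rounds that W unfolding fanout_def by blast
    then show "zs \<in> fanout_multi sc A as F t xs" using A2 len by simp
  qed
qed

lemma fanout_multi_nth:
  assumes "zs \<in> fanout_multi sc A as F t xs" and "r < length xs"
  shows "zs ! r \<in> fanout A as F t (xs ! r)"
proof -
  have "zs \<in> fanout_multi A2 A as F t xs"
    using assms(1) fanout_multi_A1_subset[of A as F t xs A2] by (cases sc) auto
  then show ?thesis using assms(2) by simp
qed

lemma fanout_multi_A1_Int_nonempty:
  assumes W1: "W1 \<subseteq> {..<n_src as}" "card W1 \<le> t"
    and W2: "W2 \<subseteq> {..<n_src as}" "card W2 \<le> t"
    and len: "length c' = length c"
    and words: "\<forall>r < length c. c ! r \<in> vecs A (n_src as) \<and> c' ! r \<in> vecs A (n_src as)"
    and agree: "\<forall>r < length c. \<forall>e < n_src as. e \<notin> W1 \<union> W2 \<longrightarrow> c ! r ! e = c' ! r ! e"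
  shows "fanout_multi A1 A as F t c \<inter> fanout_multi A1 A as F t c' \<noteq> {}"
proof -
  let ?n = "n_src as"
  define y where "y r = map (\<lambda>e. if e \<in> W1 then c' ! r ! e else c ! r ! e) [0..<?n]" for r
  define zs where "zs = map (\<lambda>r. net_out as F (y r)) [0..<length c]"
  have y_nth: "y r ! e = (if e \<in> W1 then c' ! r ! e else c ! r ! e)" if "e < ?n" for r e
    using that by (simp add: y_def)
  have y_vecs: "y r \<in> vecs A ?n" if "r < length c" for r
  proof -
    have "\<forall>e < ?n. c ! r ! e \<in> A \<and> c' ! r ! e \<in> A"
      using words that nth_in_vecs by blast
    then show ?thesis by (auto simp: y_def vecs_def)
  qed
  have "zs \<in> fanout_multi A1 A as F t c"
  proof -
    have "\<exists>y'. y' \<in> vecs A ?n \<and> (\<forall>e < ?n. e \<notin> W1 \<longrightarrow> y' ! e = c ! r ! e) \<and> zs ! r = net_out as F y'"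
      if "r < length c" for r
      using that y_vecs by (intro exI[of _ "y r"]) (simp add: y_nth zs_def)
    then show ?thesis using W1 by (auto simp: zs_def)
  qed
  moreover have "zs \<in> fanout_multi A1 A as F t c'"
  proof -
    have "\<exists>y'. y' \<in> vecs A ?n \<and> (\<forall>e < ?n. e \<notin> W2 \<longrightarrow> y' ! e = c' ! r ! e) \<and> zs ! r = net_out as F y'"
      if "r < length c" for r
      using that y_vecs agree by (intro exI[of _ "y r"]) (simp add: y_nth zs_def)
    then show ?thesis using W2 len by (auto simp: zs_def)
  qed
  ultimately show ?thesis by blast
qed

lemma card_unambiguous_le:
  assumes "finite A" and n: "0 < n_src as" "n_src as \<le> 2 * t + 1"
    and U: "unambiguous sc A as F t i C"
  shows "card C \<le> card A ^ i"
proof -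
  let ?n = "n_src as"
  have C: "C \<subseteq> {c. length c = i \<and> (\<forall>r < i. c ! r \<in> vecs A ?n)}"
    and disjoint: "\<forall>c \<in> C. \<forall>c' \<in> C. c \<noteq> c' \<longrightarrow>
      fanout_multi sc A as F t c \<inter> fanout_multi sc A as F t c' = {}"
    using U unfolding unambiguous_def by auto
  define first_edge where "first_edge c = map (\<lambda>x. x ! 0) c" for c :: "'a list list"
  have "inj_on first_edge C"
  proof (rule inj_onI, rule ccontr)
    fix c c' assume c: "c \<in> C" "c' \<in> C" "first_edge c = first_edge c'" "c \<noteq> c'"
    have len: "length c = i" "length c' = i" using C c(1,2) by auto
    let ?W1 = "{1..t} \<inter> {..<?n}" and ?W2 = "{t<..<?n}"
    have W: "?W1 \<subseteq> {..<?n}" "card ?W1 \<le> t" "?W2 \<subseteq> {..<?n}" "card ?W2 \<le> t"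
      using n card_mono[of "{1..t}" ?W1] by auto
    have words: "\<forall>r < length c. c ! r \<in> vecs A ?n \<and> c' ! r \<in> vecs A ?n"
      using C c(1,2) len by auto
    have agree: "\<forall>r < length c. \<forall>e < ?n. e \<notin> ?W1 \<union> ?W2 \<longrightarrow> c ! r ! e = c' ! r ! e"
    proof (intro allI impI)
      fix r e assume "r < length c" "e < ?n" "e \<notin> ?W1 \<union> ?W2"
      then have "e = 0" "first_edge c ! r = first_edge c' ! r" using c(3) by auto
      then show "c ! r ! e = c' ! r ! e" using \<open>r < length c\<close> len by (simp add: first_edge_def)
    qed
    have "fanout_multi A1 A as F t c \<inter> fanout_multi A1 A as F t c' \<noteq> {}"
      by (rule fanout_multi_A1_Int_nonempty[OF W _ words agree]) (simp add: len)
    moreover have "fanout_multi A1 A as F t c \<inter> fanout_multi A1 A as F t c'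
        \<subseteq> fanout_multi sc A as F t c \<inter> fanout_multi sc A as F t c'"
      by (intro Int_mono fanout_multi_A1_subset)
    ultimately show False using disjoint c by blast
  qed
  moreover have "first_edge c \<in> vecs A i" if "c \<in> C" for c
  proof -
    have "\<forall>r < i. c ! r ! 0 \<in> A" using C that nth_in_vecs[OF _ n(1)] by blast
    then show ?thesis using C that by (auto simp: first_edge_def vecs_def set_conv_nth)
  qed
  ultimately have "card C \<le> card (vecs A i)"
    using card_inj_on_le[of first_edge C] finite_vecs[OF \<open>finite A\<close>] by blast
  then show ?thesis using card_vecs[OF \<open>finite A\<close>] by simp
qed

definition top_count :: "'a list \<Rightarrow> nat" where
  "top_count v = Max (count_list v ` set v)"

definition mode :: "'a list \<Rightarrow> 'a" where
  "mode v = (SOME m. m \<in> set v \<and> count_list v m = top_count v)"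

definition mode_summary :: "'a list \<Rightarrow> 'a \<times> nat" where
  "mode_summary v = (mode v, top_count v)"

lemma count_list_le_top_count: "count_list v a \<le> top_count v"
  by (cases "a \<in> set v") (simp_all add: top_count_def)

lemma mode_in_set_count_list_mode:
  assumes "v \<noteq> []"
  shows "mode v \<in> set v \<and> count_list v (mode v) = top_count v"
proof -
  have "top_count v \<in> count_list v ` set v"
    unfolding top_count_def using assms by (intro Max_in) auto
  then have "\<exists>m. m \<in> set v \<and> count_list v m = top_count v" by auto
  then show ?thesis unfolding mode_def by (rule someI_ex)
qed

lemma count_list_add_count_list_le_length:
  assumes "a \<noteq> b"
  shows "count_list v a + count_list v b \<le> length v"
proof -
  have "count_list v a + count_list v b = sum (count_list v) {a, b}"
    using assms by simp
  also have "\<dots> \<le> sum (count_list v) (set v \<union> {a, b})"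
    by (intro sum_mono2) auto
  also have "\<dots> = length v"
    by (intro sum_count_set) auto
  finally show ?thesis .
qed

lemma length_le_card_mult_top_count:
  assumes "finite A" and "set v \<subseteq> A"
  shows "length v \<le> card A * top_count v"
proof -
  have "length v = sum (count_list v) A"
    using assms by (simp add: sum_count_set)
  also have "\<dots> \<le> sum (\<lambda>_. top_count v) A"
    by (intro sum_mono count_list_le_top_count)
  finally show ?thesis by simp
qed

lemma count_list_add_le_if_mode_summary_eq:
  assumes summary: "mode_summary v = mode_summary v'"
    and len: "length v' = length v" and "a \<noteq> b"
  shows "count_list v a + count_list v' b \<le> length v"
proof (cases "v = []")
  case False
  then have "v' \<noteq> []" using len by auto
  let ?m = "mode v"
  have top: "count_list v ?m = top_count v" "count_list v' ?m = top_count v"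
    using mode_in_set_count_list_mode[OF \<open>v \<noteq> []\<close>]
      mode_in_set_count_list_mode[OF \<open>v' \<noteq> []\<close>] summary
    by (simp_all add: mode_summary_def)
  show ?thesis
  proof (cases "a = ?m")
    case True
    then have "count_list v' ?m + count_list v' b \<le> length v'"
      using \<open>a \<noteq> b\<close> by (intro count_list_add_count_list_le_length) auto
    then show ?thesis using True top len by simp
  next
    case False
    then have "count_list v ?m + count_list v a \<le> length v"
      by (intro count_list_add_count_list_le_length) auto
    moreover have "count_list v' b \<le> top_count v"
      using count_list_le_top_count[of v' b] summary by (simp add: mode_summary_def)
    ultimately show ?thesis using top by linarith
  qed
qed (use len in simp)

lemma mode_summary_vecs_subset:
  assumes "finite A" and "0 < n"
  shows "mode_summary ` vecs A n \<subseteq> A \<times> {k. n \<le> card A * k \<and> k \<le> n}"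
proof
  fix s assume "s \<in> mode_summary ` vecs A n"
  then obtain v where v: "v \<in> vecs A n" "s = mode_summary v" by auto
  then have "v \<noteq> []" "length v = n" "set v \<subseteq> A" using assms(2) by (auto simp: vecs_def)
  then show "s \<in> A \<times> {k. n \<le> card A * k \<and> k \<le> n}"
    using mode_in_set_count_list_mode[of v] length_le_card_mult_top_count[OF assms(1)]
      count_le_length[of v "mode v"]
    by (auto simp: mode_summary_def v(2))
qed

lemma Suc_le_two_power_pred: "3 \<le> t \<Longrightarrow> t + 1 \<le> 2 ^ (t - 1)"
proof (induction t rule: dec_induct)
  case (step t)
  then show ?case by (cases t) auto
qed simp

lemma Suc_le_power_pred:
  fixes q t :: nat
  assumes "2 \<le> q" and "2 \<le> t" and "\<not> (q = 2 \<and> t = 2)"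
  shows "t + 1 \<le> q ^ (t - 1)"
proof (cases "t = 2")
  case False
  then have "t + 1 \<le> 2 ^ (t - 1)" using assms(2) Suc_le_two_power_pred by simp
  also have "\<dots> \<le> q ^ (t - 1)" using assms(1) by (simp add: power_mono)
  finally show ?thesis .
qed (use assms in simp)

lemma card_mode_summary_vecs_le:
  assumes "alphabet A" and "2 \<le> t"
  shows "card (mode_summary ` vecs A (t + 1)) \<le> card (vecs A t)"
proof -
  let ?q = "card A" and ?K = "{k. t + 1 \<le> card A * k \<and> k \<le> t + 1}"
  have "finite A" and q: "2 \<le> ?q" using assms(1) by (auto simp: alphabet_def)
  have "card ?K \<le> ?q ^ (t - 1)"
    \<comment> \<open>for q = t = 2 the crude bound q (t + 1) \<le> q^t fails: there the top count is at least 2\<close>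
  proof (cases "?q = 2 \<and> t = 2")
    case True
    then have "?K \<subseteq> {2..3}" by auto
    then have "card ?K \<le> 2" using card_mono[of "{2..3::nat}" ?K] by simp
    then show ?thesis using True by simp
  next
    case False
    have "?K \<subseteq> {1..t + 1}" by (auto simp: Suc_le_eq) (metis gr0I mult_0_right not_less0)
    then have "card ?K \<le> t + 1" using card_mono[of "{1..t + 1}" ?K] by simp
    then show ?thesis using Suc_le_power_pred[OF q assms(2) False] by linarith
  qed
  then have "card (A \<times> ?K) \<le> ?q ^ t"
    using assms(2) by (simp add: card_cartesian_product power_eq_if)
  moreover have "card (mode_summary ` vecs A (t + 1)) \<le> card (A \<times> ?K)"
    using \<open>finite A\<close> mode_summary_vecs_subset[OF \<open>finite A\<close>, of "t + 1"]
    by (intro card_mono) (auto intro: finite_subset[of ?K "{..t + 1}"])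
  ultimately show ?thesis using card_vecs[OF \<open>finite A\<close>] by simp
qed

lemma fanout_replicateE:
  assumes "z \<in> fanout A as F t (replicate (n_src as) a)"
  obtains y where "y \<in> vecs A (n_src as)" "z = net_out as F y"
    "n_src as \<le> count_list y a + t"
proof -
  obtain y W where y: "z = net_out as F y" "y \<in> vecs A (n_src as)"
    and W: "W \<subseteq> {..<n_src as}" "card W \<le> t"
    and kept: "\<forall>e < n_src as. e \<notin> W \<longrightarrow> y ! e = a"
    using assms unfolding fanout_def by auto
  have len: "length y = n_src as" using y(2) by (simp add: vecs_def)
  have "{e. e < length y \<and> a \<noteq> y ! e} \<subseteq> W" using kept len by auto
  then have "length (filter (\<lambda>w. a \<noteq> w) y) \<le> card W"
    unfolding length_filter_conv_card using W(1) by (intro card_mono) (auto intro: finite_subset)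
  then have "length (filter (\<lambda>w. a \<noteq> w) y) \<le> t" using W(2) by linarith
  moreover have "length (filter ((=) a) y) + length (filter (\<lambda>w. a \<noteq> w) y) = length y"
    by (rule sum_length_filter_compl)
  ultimately have "n_src as \<le> count_list y a + t"
    using len by (simp add: count_list_eq_length_filter)
  with y that show ?thesis by blast
qed

definition mode_code :: "('a \<times> nat \<Rightarrow> 'a list) \<Rightarrow> ('a list \<Rightarrow> 'a list) list" where
  "mode_code enc = [id, enc \<circ> mode_summary]"

lemma network_code_mode_code:
  assumes "enc ` mode_summary ` vecs A (t + 1) \<subseteq> vecs A t"
  shows "network_code A [t, t + 1] [t, t] (mode_code enc)"
  using assms unfolding network_code_def mode_code_def by (auto simp: less_Suc_eq)

lemma net_out_mode_code:
  assumes "length y = 2 * t + 1"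
  shows "net_out [t, t + 1] (mode_code enc) y = take t y @ enc (mode_summary (drop t y))"
  using assms by (simp add: net_out_two_nodes mode_code_def)

lemma fanout_mode_code_replicate_disjoint:
  assumes enc: "inj_on enc (mode_summary ` vecs A (t + 1))" and "a \<noteq> b"
  shows "fanout A [t, t + 1] (mode_code enc) t (replicate (2 * t + 1) a)
    \<inter> fanout A [t, t + 1] (mode_code enc) t (replicate (2 * t + 1) b) = {}"
proof (rule ccontr)
  let ?F = "mode_code enc"
  assume "\<not> ?thesis"
  then obtain z where za: "z \<in> fanout A [t, t + 1] ?F t (replicate (2 * t + 1) a)"
    and zb: "z \<in> fanout A [t, t + 1] ?F t (replicate (2 * t + 1) b)"
    by blast
  have n: "n_src [t, t + 1] = 2 * t + 1" by simp
  obtain y where y: "y \<in> vecs A (2 * t + 1)" "z = net_out [t, t + 1] ?F y"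
    "2 * t + 1 \<le> count_list y a + t"
    using fanout_replicateE[of z A "[t, t + 1]", unfolded n, OF za] by blast
  obtain y' where y': "y' \<in> vecs A (2 * t + 1)" "z = net_out [t, t + 1] ?F y'"
    "2 * t + 1 \<le> count_list y' b + t"
    using fanout_replicateE[of z A "[t, t + 1]", unfolded n, OF zb] by blast
  define u v u' v' where "u = take t y" "v = drop t y" "u' = take t y'" "v' = drop t y'"
  have split: "y = u @ v" "y' = u' @ v'" by (simp_all add: u_v_u'_v'_def)
  have vecs: "u \<in> vecs A t" "v \<in> vecs A (t + 1)" "u' \<in> vecs A t" "v' \<in> vecs A (t + 1)"
    using y(1) y'(1) by (auto simp: u_v_u'_v'_def vecs_def dest: in_set_takeD in_set_dropD)
  have "u @ enc (mode_summary v) = u' @ enc (mode_summary v')"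
    using net_out_mode_code[of y t enc] net_out_mode_code[of y' t enc] y(1,2) y'(1,2)
    by (simp add: vecs_def u_v_u'_v'_def)
  then have "u' = u" "enc (mode_summary v) = enc (mode_summary v')"
    using vecs by (auto simp: vecs_def)
  then have "mode_summary v = mode_summary v'"
    using inj_onD[OF enc _ imageI[OF vecs(2)] imageI[OF vecs(4)]] by blast
  then have "count_list v a + count_list v' b \<le> t + 1"
    using count_list_add_le_if_mode_summary_eq[of v v' a b] \<open>a \<noteq> b\<close> vecs
    by (simp add: vecs_def)
  moreover have "count_list u a + count_list u b \<le> t"
    using count_list_add_count_list_le_length[OF \<open>a \<noteq> b\<close>, of u] vecs by (simp add: vecs_def)
  ultimately show False
    using y(3) y'(3) split \<open>u' = u\<close> by simp
qed

definition repetition_code :: "'a set \<Rightarrow> nat \<Rightarrow> nat \<Rightarrow> 'a list list set" where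
  "repetition_code A n i = map (replicate n) ` vecs A i"

lemma card_repetition_code:
  assumes "finite A" and "0 < n"
  shows "card (repetition_code A n i) = card A ^ i"
proof -
  have "inj (replicate n :: 'a \<Rightarrow> 'a list)" using assms(2) by (simp add: inj_def)
  then have "inj_on (map (replicate n)) (vecs A i)" by (meson inj_mapI inj_on_subset subset_UNIV)
  then show ?thesis
    by (simp add: repetition_code_def card_image card_vecs[OF assms(1)])
qed

lemma unambiguous_repetition_code:
  assumes "A \<noteq> {}"
    and disjoint: "\<And>a b. a \<in> A \<Longrightarrow> b \<in> A \<Longrightarrow> a \<noteq> b \<Longrightarrow>
      fanout A as F t (replicate (n_src as) a) \<inter> fanout A as F t (replicate (n_src as) b) = {}"
  shows "unambiguous sc A as F t i (repetition_code A (n_src as) i)"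
  unfolding unambiguous_def
proof (intro conjI ballI impI)
  let ?n = "n_src as"
  obtain a where "a \<in> A" using assms(1) by blast
  then have "replicate i a \<in> vecs A i" by (simp add: vecs_def set_replicate_conv_if)
  then show "repetition_code A ?n i \<noteq> {}" by (auto simp: repetition_code_def)
  show "repetition_code A ?n i \<subseteq> {c. length c = i \<and> (\<forall>r < i. c ! r \<in> vecs A ?n)}"
    by (auto simp: repetition_code_def vecs_def)
  fix c c' assume "c \<in> repetition_code A ?n i" "c' \<in> repetition_code A ?n i" "c \<noteq> c'"
  then obtain x x' where x: "c = map (replicate ?n) x" "c' = map (replicate ?n) x'"
    "x \<in> vecs A i" "x' \<in> vecs A i"
    by (auto simp: repetition_code_def)
  then obtain r where r: "r < i" "x ! r \<noteq> x' ! r"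
    using \<open>c \<noteq> c'\<close> nth_equalityI[of x x'] by (auto simp: vecs_def)
  have "fanout A as F t (c ! r) \<inter> fanout A as F t (c' ! r) = {}"
    using disjoint[OF nth_in_vecs nth_in_vecs r(2)] x r(1) by (simp add: vecs_def)
  moreover have "zs ! r \<in> fanout A as F t (c ! r) \<inter> fanout A as F t (c' ! r)"
    if "zs \<in> fanout_multi sc A as F t c" "zs \<in> fanout_multi sc A as F t c'" for zs
    using that fanout_multi_nth r(1) x by (fastforce simp: vecs_def)
  ultimately show "fanout_multi sc A as F t c \<inter> fanout_multi sc A as F t c' = {}"
    by blast
qed

lemma capacity_eq_oneI:
  assumes "alphabet A" and "0 < i"
    and upper: "\<And>F C. network_code A as bs F \<Longrightarrow> unambiguous sc A as F t i C \<Longrightarrow>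
      card C \<le> card A ^ i"
    and "network_code A as bs F" "unambiguous sc A as F t i C" "card C = card A ^ i"
  shows "capacity sc A as bs t i = 1"
proof -
  let ?b = "real (card A)"
  let ?rate = "\<lambda>k. log ?b (real k) / real i"
  let ?S = "{log ?b (real (card C)) / real i | F C.
    network_code A as bs F \<and> unambiguous sc A as F t i C}"
  have b: "1 < ?b" using assms(1) by (simp add: alphabet_def)
  have log_top: "log ?b (real (card A ^ i)) = real i"
    using b by (simp add: log_nat_power)
  then have rate_top: "?rate (card A ^ i) = 1"
    using \<open>0 < i\<close> by simp
  have rate_le: "?rate k \<le> 1" if "k \<le> card A ^ i" for k
  proof (cases "k = 0")
    case False
    then have "log ?b (real k) \<le> log ?b (real (card A ^ i))"
      using b that by (subst log_le_cancel_iff) auto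
    then show ?thesis using log_top \<open>0 < i\<close> by simp
  qed (simp add: log_def)
  have S: "?S \<subseteq> ?rate ` {..card A ^ i}"
    using upper by auto
  show ?thesis
    unfolding capacity_def
  proof (rule Max_eqI)
    show "finite ?S" using S by (rule finite_subset) simp
    show "s \<le> 1" if "s \<in> ?S" for s using that upper rate_le by auto
    show "1 \<in> ?S"
      using assms(4,5) rate_top[folded assms(6)] by (intro CollectI exI[of _ F] exI[of _ C]) simp
  qed
qed

theorem proposition4p5:
  fixes A :: "'a set" and t i :: nat and sc :: scenario
  assumes "alphabet A" and "t \<ge> 2" and "i > 0"
  shows "capacity sc A [t, t + 1] [t, t] t i = 1"
proof -
  have "finite A" "A \<noteq> {}" using assms(1) by (auto simp: alphabet_def)
  obtain enc where enc: "enc ` mode_summary ` vecs A (t + 1) \<subseteq> vecs A t"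
    "inj_on enc (mode_summary ` vecs A (t + 1))"
    using card_le_inj[OF finite_imageI[OF finite_vecs] finite_vecs
        card_mode_summary_vecs_le[OF assms(1,2)]] \<open>finite A\<close> by blast
  have n: "n_src [t, t + 1] = 2 * t + 1" by simp
  let ?F = "mode_code enc" and ?C = "repetition_code A (2 * t + 1) i"
  have "unambiguous sc A [t, t + 1] ?F t i ?C"
    by (rule unambiguous_repetition_code[OF \<open>A \<noteq> {}\<close>, of "[t, t + 1]", unfolded n])
      (rule fanout_mode_code_replicate_disjoint[OF enc(2)])
  moreover have "card ?C = card A ^ i"
    using card_repetition_code[OF \<open>finite A\<close>] by simp
  moreover have "card C \<le> card A ^ i" if "unambiguous sc A [t, t + 1] F t i C" for F C
    using card_unambiguous_le[OF \<open>finite A\<close> _ _ that] by simp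
  ultimately show ?thesis
    using capacity_eq_oneI[OF assms(1,3)] network_code_mode_code[OF enc(1)] by blast
qed

end
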